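(* Consider the $M_t^{B_t}/G_t/\infty$ queue described in the context, starting empty at time $0$. For each $t\ge0$ and all $\alpha,\beta,\gamma\ge0$, $$\mathbb{E}\big[e^{-\alpha W(t)-\beta Q(t)-\gamma D(t)}\big]=\exp\Big(-\int_0^t\mathcal{E}_s\Big[1-e^{-\sum_{j=1}^{B_s}\left[\beta\mathbf{1}(S_j(s)>t-s)+\gamma\mathbf{1}(S_j(s)\le t-s)+\alpha(S_j(s)-(t-s))^+\right]}\Big]\lambda(s)\,ds\Big).$$
   Context: Model ($M_t^{B_t}/G_t/\infty$ queue): batches of customers arrive at the points of a non-homogeneous Poisson process $\{A(t);t\ge0\}$ on $[0,\infty)$ with rate function $\lambda:[0,\infty)\to[0,\infty)$. A batch arriving at time $s$ has a random positive-integer size $B_s$ and its customers bring amounts of work $S_1(s),\dots,S_{B_s}(s)$, with joint law depending on $s$ (possibly dependent within a batch); different batches are independent of each other and of the arrival process. $\mathcal{E}_s$ denotes expectation with respect to the law of a batch arriving at time $s$. There are infinitely many servers, so a customer arriving at time $s$ with work $S$ departs at time $s+S$. $Q(t)$ is the number of customers in the system at time $t$, $D(t)$ the number of departures in $(0,t]$, and $W(t)$ is the workload at time $t$, i.e. the total remaining work $\sum (S-(t-s))^+$ over all customers who arrived at times $s\le t$ with work $S$. *)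

theory Defs
  imports "HOL-Probability.Probability"
begin

text \<open>Mark space of a batch: (batch size b, works S 0, S 1, ...); only S 0 .. S (b-1) matter.\<close>
definition markM :: "(nat \<times> (nat \<Rightarrow> real)) measure" where
  "markM = count_space UNIV \<Otimes>\<^sub>M PiM UNIV (\<lambda>_. borel)"

text \<open>Space of sequences of arrival epochs (ereal, with \<infinity> meaning no such arrival).\<close>
definition timesM :: "(nat \<Rightarrow> ereal) measure" where
  "timesM = PiM UNIV (\<lambda>_. borel)"

definition poisson_prob :: "real \<Rightarrow> nat \<Rightarrow> real" where
  "poisson_prob L k = exp (- L) * L ^ k / fact k"

definition arrivals :: "(nat \<Rightarrow> 'w \<Rightarrow> ereal) \<Rightarrow> 'w \<Rightarrow> real \<Rightarrow> nat set" where
  "arrivals T \<omega> t = {n. T n \<omega> \<le> ereal t}"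

definition Acount :: "(nat \<Rightarrow> 'w \<Rightarrow> ereal) \<Rightarrow> 'w \<Rightarrow> real \<Rightarrow> nat" where
  "Acount T \<omega> t = card (arrivals T \<omega> t)"

definition nhpp :: "'w measure \<Rightarrow> (real \<Rightarrow> real) \<Rightarrow> (nat \<Rightarrow> 'w \<Rightarrow> ereal) \<Rightarrow> bool" where
  "nhpp M lam T \<longleftrightarrow>
     (\<forall>s\<ge>0. 0 \<le> lam s) \<and>
     (\<forall>t\<ge>0. set_integrable lborel {0..t} lam) \<and>
     (\<forall>n. T n \<in> borel_measurable M) \<and>
     (\<forall>\<omega>\<in>space M. \<forall>n. 0 < T n \<omega>) \<and>
     (\<forall>\<omega>\<in>space M. \<forall>t. finite (arrivals T \<omega> t)) \<and>
     (\<forall>a b k. 0 \<le> a \<longrightarrow> a \<le> b \<longrightarrow>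
        measure M {\<omega>\<in>space M. Acount T \<omega> b - Acount T \<omega> a = k}
          = poisson_prob (LINT s:{a<..b}|lborel. lam s) k) \<and>
     (\<forall>(n::nat) (\<tau>::nat \<Rightarrow> real). 0 \<le> \<tau> 0 \<longrightarrow> mono \<tau> \<longrightarrow>
        prob_space.indep_vars M (\<lambda>_. count_space UNIV)
          (\<lambda>i \<omega>. Acount T \<omega> (\<tau> (Suc i)) - Acount T \<omega> (\<tau> i)) {..<n})"

definition batch_kernel :: "(real \<Rightarrow> (nat \<times> (nat \<Rightarrow> real)) measure) \<Rightarrow> bool" where
  "batch_kernel K \<longleftrightarrow> K \<in> borel \<rightarrow>\<^sub>M prob_algebra markM \<and>
     (\<forall>s\<ge>0. AE y in K s. 1 \<le> fst y \<and> (\<forall>j<fst y. 0 \<le> snd y j))"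

text \<open>Batches are independent of each other and of the arrival process, the n-th batch
  having law K (T n): joint law of (T, Y 0, ..., Y (n-1)) is that of T with conditionally
  independent marks.\<close>
definition marked_by :: "'w measure \<Rightarrow> (real \<Rightarrow> (nat \<times> (nat \<Rightarrow> real)) measure)
    \<Rightarrow> (nat \<Rightarrow> 'w \<Rightarrow> ereal) \<Rightarrow> (nat \<Rightarrow> 'w \<Rightarrow> nat \<times> (nat \<Rightarrow> real)) \<Rightarrow> bool" where
  "marked_by M K T Y \<longleftrightarrow>
     (\<forall>n. Y n \<in> M \<rightarrow>\<^sub>M markM) \<and>
     (\<forall>(n::nat) C E. C \<in> sets timesM \<longrightarrow> (\<forall>i<n. E i \<in> sets markM) \<longrightarrow>
        emeasure M {\<omega>\<in>space M. (\<lambda>k. T k \<omega>) \<in> C \<and> (\<forall>i<n. Y i \<omega> \<in> E i)}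
          = (\<integral>\<^sup>+\<omega>. indicator C (\<lambda>k. T k \<omega>) *
                 (\<Prod>i<n. emeasure (K (real_of_ereal (T i \<omega>))) (E i)) \<partial>M))"

definition Qnum :: "(nat \<Rightarrow> 'w \<Rightarrow> ereal) \<Rightarrow> (nat \<Rightarrow> 'w \<Rightarrow> nat \<times> (nat \<Rightarrow> real)) \<Rightarrow> real \<Rightarrow> 'w \<Rightarrow> nat" where
  "Qnum T Y t \<omega> = (\<Sum>n\<in>arrivals T \<omega> t.
      card {j. j < fst (Y n \<omega>) \<and> snd (Y n \<omega>) j > t - real_of_ereal (T n \<omega>)})"

definition Dnum :: "(nat \<Rightarrow> 'w \<Rightarrow> ereal) \<Rightarrow> (nat \<Rightarrow> 'w \<Rightarrow> nat \<times> (nat \<Rightarrow> real)) \<Rightarrow> real \<Rightarrow> 'w \<Rightarrow> nat" where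
  "Dnum T Y t \<omega> = (\<Sum>n\<in>arrivals T \<omega> t.
      card {j. j < fst (Y n \<omega>) \<and> snd (Y n \<omega>) j \<le> t - real_of_ereal (T n \<omega>)})"

definition Wload :: "(nat \<Rightarrow> 'w \<Rightarrow> ereal) \<Rightarrow> (nat \<Rightarrow> 'w \<Rightarrow> nat \<times> (nat \<Rightarrow> real)) \<Rightarrow> real \<Rightarrow> 'w \<Rightarrow> real" where
  "Wload T Y t \<omega> = (\<Sum>n\<in>arrivals T \<omega> t. \<Sum>j<fst (Y n \<omega>).
      max 0 (snd (Y n \<omega>) j - (t - real_of_ereal (T n \<omega>))))"

end

theory Submission
  imports Defs
begin

(* Writing H(s, y) for the exponent contributed by a batch y that arrived at time s, the quantity
   exp (-alpha W(t) - beta Q(t) - gamma D(t)) is the product of exp (-H(T n, Y n)) over the batches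
   that arrived by time t. Conditionally on the arrival epochs the batches are independent with
   laws K (T n), so the expectation equals E [prod g (T n)] with g s = E_s [exp (-H(s, .))].
   The probability generating functional of the Poisson process,
   E [prod over T n <= t of g (T n)] = exp (- integral over [0, t] of (1 - g) lam),
   holds for step functions by independence of the increments and the Poisson generating
   function, and it is stable under bounded pointwise limits; as every Borel function is of Baire
   class, it holds for all Borel g with values in [0, 1].
   The conditioning identity holds for rectangle indicators by the definition of marked_by; the
   factors are replaced one at a time by arbitrary bounded test functions, using that finite
   measures on a product space are determined by their values on rectangles. *)

section \<open>Baire functions\<close>

inductive baire :: "(real \<Rightarrow> real) \<Rightarrow> bool" where
  baire_continuous: "continuous_on UNIV f \<Longrightarrow> baire f"
| baire_limit: "(\<And>k. baire (F k)) \<Longrightarrow> (\<And>x. (\<lambda>k. F k x) \<longlonglongrightarrow> f x) \<Longrightarrow> baire f"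

lemma baire_measurable: "baire f \<Longrightarrow> f \<in> borel_measurable borel"
proof (induct rule: baire.induct)
  case (baire_continuous f)
  then show ?case by (rule borel_measurable_continuous_onI)
next
  case (baire_limit F f)
  then show ?case by (auto intro: borel_measurable_LIMSEQ_real[where u=F])
qed

lemma baire_compose:
  assumes h: "continuous_on UNIV h" and f: "baire f"
  shows "baire (\<lambda>x. h (f x))"
  using f
proof induct
  case (baire_continuous f)
  then show ?case
    using continuous_on_compose2[OF h] by (auto intro: baire.baire_continuous)
next
  case (baire_limit F f)
  have "isCont h y" for y using h by (simp add: continuous_on_eq_continuous_at)
  then have "(\<lambda>k. h (F k x)) \<longlonglongrightarrow> h (f x)" for x
    using isCont_tendsto_compose[OF _ baire_limit(3)] by blast
  then show ?case by (rule baire.baire_limit[OF baire_limit(2)])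
qed

lemma baire_binop:
  fixes op :: "real \<Rightarrow> real \<Rightarrow> real"
  assumes op: "continuous_on UNIV (\<lambda>p. op (fst p) (snd p))" and f: "baire f" and g: "baire g"
  shows "baire (\<lambda>x. op (f x) (g x))"
proof -
  have "isCont (\<lambda>p. op (fst p) (snd p)) z" for z
    using op continuous_on_eq_continuous_at open_UNIV by blast
  from isCont_tendsto_compose[OF this tendsto_Pair]
  have lim: "(\<lambda>k. op (A k) (B k)) \<longlonglongrightarrow> op a b" if "A \<longlonglongrightarrow> a" "B \<longlonglongrightarrow> b"
    for A B :: "nat \<Rightarrow> real" and a b
    using that by fastforce
  have cont: "continuous_on UNIV (\<lambda>x. op (f x) (g x))"
    if "continuous_on UNIV f" "continuous_on UNIV g" for f g :: "real \<Rightarrow> real"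
    using continuous_on_compose2[OF op continuous_on_Pair[OF that]] by simp
  have left: "baire (\<lambda>x. op (f x) (g x))" if "baire f" "continuous_on UNIV g" for f g
    using that(1)
  proof induct
    case (baire_continuous f)
    then show ?case by (intro baire.baire_continuous cont that(2))
  next
    case (baire_limit F f)
    have "(\<lambda>k. op (F k x) (g x)) \<longlonglongrightarrow> op (f x) (g x)" for x
      using lim[OF baire_limit(3) tendsto_const] .
    then show ?case by (rule baire.baire_limit[OF baire_limit(2)])
  qed
  show ?thesis
    using g
  proof induct
    case (baire_continuous g)
    then show ?case by (rule left[OF f])
  next
    case (baire_limit G g)
    have "(\<lambda>k. op (f x) (G k x)) \<longlonglongrightarrow> op (f x) (g x)" for x
      using lim[OF tendsto_const baire_limit(3)] .
    then show ?case by (rule baire.baire_limit[OF baire_limit(2)])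
  qed
qed

lemma baire_const: "baire (\<lambda>x. c)"
  by (intro baire_continuous continuous_intros)

lemma baire_sum: "finite I \<Longrightarrow> (\<And>i. i \<in> I \<Longrightarrow> baire (f i)) \<Longrightarrow> baire (\<lambda>x. \<Sum>i\<in>I. f i x)"
proof (induct I rule: finite_induct)
  case (insert i I)
  have "continuous_on UNIV (\<lambda>p :: real \<times> real. fst p + snd p)"
    by (intro continuous_intros)
  from baire_binop[OF this] insert show ?case by simp
qed (simp add: baire_const)

lemma baire_indicator_greaterThanLessThan: "baire (indicator {a<..<b})"
proof (rule baire_limit)
  define F where "F k x = min 1 (real k * max 0 (min (x - a) (b - x)))" for k x
  show "baire (F k)" for k unfolding F_def by (intro baire_continuous continuous_intros)
  fix x :: real
  show "(\<lambda>k. F k x) \<longlonglongrightarrow> indicator {a<..<b} x"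
  proof (cases "a < x \<and> x < b")
    case True
    then have d: "0 < min (x - a) (b - x)" by simp
    obtain n where n: "1 < real n * min (x - a) (b - x)" using ex_less_of_nat_mult[OF d] by blast
    have "F k x = 1" if "n \<le> k" for k
    proof -
      have "real n * min (x - a) (b - x) \<le> real k * min (x - a) (b - x)"
        using d that by (intro mult_right_mono) auto
      then have "1 \<le> real k * min (x - a) (b - x)" using n by linarith
      then show ?thesis unfolding F_def using d by simp
    qed
    then have "\<forall>\<^sub>F k in sequentially. F k x = 1" by (auto simp: eventually_sequentially)
    then show ?thesis using True by (simp add: tendsto_eventually)
  next
    case False
    then have "F k x = 0" for k unfolding F_def by auto
    then show ?thesis using False by simp
  qed
qed

lemma baire_indicator:
  assumes "A \<in> sets borel" shows "baire (indicator A)"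
proof -
  have "sets borel = sigma_sets UNIV (range (\<lambda>(a, b). box a (b::real)))"
    unfolding borel_eq_box[where 'a=real] by (subst sets_measure_of) auto
  with assms have "A \<in> sigma_sets UNIV (range (\<lambda>(a, b). box a (b::real)))" by simp
  then show "baire (indicator A)"
  proof induct
    case (Basic a)
    then show ?case by (auto simp: baire_indicator_greaterThanLessThan)
  next
    case Empty
    then show ?case using baire_const[of 0] by simp
  next
    case (Compl A)
    have "indicator (UNIV - A) = (\<lambda>x. 1 - indicator A x :: real)"
      by (auto simp: fun_eq_iff indicator_def)
    moreover have "continuous_on UNIV (\<lambda>y :: real. 1 - y)" by (intro continuous_intros)
    then have "baire (\<lambda>x. 1 - indicator A x)" by (rule baire_compose[OF _ Compl(2)])
    ultimately show ?case by simp
  next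
    case (Union A)
    have max: "continuous_on UNIV (\<lambda>p :: real \<times> real. max (fst p) (snd p))"
      by (intro continuous_intros)
    have "baire (indicator (\<Union>i<n. A i))" for n
    proof (induct n)
      case (Suc n)
      have "indicator (\<Union>i<Suc n. A i) = (\<lambda>x. max (indicator (\<Union>i<n. A i) x) (indicator (A n) x) :: real)"
        by (auto simp: fun_eq_iff indicator_def lessThan_Suc)
      then show ?case using baire_binop[OF max Suc Union(2)] by simp
    qed (simp add: baire_const)
    then show ?case by (rule baire_limit) (rule LIMSEQ_indicator_UN)
  qed
qed

lemma baire_simple_function:
  assumes f: "simple_function borel f" shows "baire f"
proof -
  have finite: "finite (range f)" using simple_functionD(1)[OF f] by simp
  have "(\<Sum>y\<in>range f. y * indicator (f -` {y}) x) = f x" for x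
  proof -
    have "(\<Sum>y\<in>range f. y * indicator (f -` {y}) x) = (\<Sum>y\<in>range f. if y = f x then y else 0)"
      by (intro sum.cong refl) (auto simp: indicator_def)
    then show ?thesis using finite by simp
  qed
  then have f_eq: "(\<lambda>x. \<Sum>y\<in>range f. y * indicator (f -` {y}) x) = f" ..
  have "baire (\<lambda>x. \<Sum>y\<in>range f. y * indicator (f -` {y}) x)"
  proof (rule baire_sum[OF finite])
    fix y :: real
    have "continuous_on UNIV ((*) y)" by simp
    moreover have "baire (indicator (f -` {y}))"
      using simple_functionD(2)[OF f, of "{y}"] by (simp add: baire_indicator)
    ultimately show "baire (\<lambda>x. y * indicator (f -` {y}) x)" by (rule baire_compose[of "(*) y"])
  qed
  then show ?thesis unfolding f_eq .
qed

lemma baire_if_borel_measurable: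
  assumes "f \<in> borel_measurable borel" shows "baire f"
proof -
  obtain F where F: "\<And>i. simple_function borel (F i)" "\<And>x. (\<lambda>i. F i x) \<longlonglongrightarrow> f x"
    using borel_measurable_implies_sequence_metric[OF assms, of 0] by auto
  show ?thesis by (rule baire_limit[where F=F]) (use F baire_simple_function in auto)
qed

section \<open>The probability generating functional of the Poisson process\<close>

lemma poisson_prob_pgf:
  "(\<lambda>k. c ^ k * poisson_prob L k) sums exp (- ((1 - c) * L))"
proof -
  have "(\<lambda>k. exp (- L) * ((c * L) ^ k / fact k)) sums (exp (- L) * exp (c * L))"
    using exp_converges[of "c * L"] by (intro sums_mult) (simp add: divide_inverse mult.commute)
  moreover have "exp (- L) * exp (c * L) = exp (- ((1 - c) * L))"
    by (simp add: exp_add[symmetric] algebra_simps)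
  ultimately show ?thesis
    by (simp add: poisson_prob_def power_mult_distrib mult_ac)
qed

lemma (in prob_space) has_bochner_integral_nat_valued:
  fixes X :: "'a \<Rightarrow> nat" and f p :: "nat \<Rightarrow> real"
  assumes X[measurable]: "X \<in> M \<rightarrow>\<^sub>M count_space UNIV"
    and p: "\<And>k. prob {\<omega>\<in>space M. X \<omega> = k} = p k"
    and S: "(\<lambda>k. f k * p k) sums S" and f: "\<And>k. 0 \<le> f k"
  shows "has_bochner_integral M (\<lambda>\<omega>. f (X \<omega>)) S"
proof (rule has_bochner_integral_nn_integral)
  have terms_nonneg: "0 \<le> f k * p k" for k
    using f[of k] measure_nonneg[of M] p[of k] by (metis mult_nonneg_nonneg)
  show "0 \<le> S" by (rule sums_le[OF _ sums_zero S]) (use terms_nonneg in auto)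
  have "ennreal (f (X \<omega>)) = (\<Sum>k. ennreal (f k) * indicator {\<omega>\<in>space M. X \<omega> = k} \<omega>)"
    if "\<omega> \<in> space M" for \<omega>
    using that by (subst suminf_finite[of "{X \<omega>}"]) (auto simp: indicator_def)
  then have "(\<integral>\<^sup>+\<omega>. ennreal (f (X \<omega>)) \<partial>M)
      = (\<integral>\<^sup>+\<omega>. (\<Sum>k. ennreal (f k) * indicator {\<omega>\<in>space M. X \<omega> = k} \<omega>) \<partial>M)"
    by (intro nn_integral_cong) simp
  also have "\<dots> = (\<Sum>k. \<integral>\<^sup>+\<omega>. ennreal (f k) * indicator {\<omega>\<in>space M. X \<omega> = k} \<omega> \<partial>M)"
    by (rule nn_integral_suminf) measurable
  also have "\<dots> = (\<Sum>k. ennreal (f k * p k))"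
    by (simp add: nn_integral_cmult emeasure_eq_measure p ennreal_mult' f)
  also have "\<dots> = ennreal S"
    by (rule suminf_ennreal_eq[OF terms_nonneg S])
  finally show "(\<integral>\<^sup>+\<omega>. ennreal (f (X \<omega>)) \<partial>M) = ennreal S" .
qed (use f in auto)

lemma mono_cell_unique:
  fixes \<tau> :: "nat \<Rightarrow> 'a::linorder"
  assumes "mono \<tau>" and "\<tau> i < s" "s \<le> \<tau> (Suc i)" and "\<tau> j < s" "s \<le> \<tau> (Suc j)"
  shows "i = j"
proof (rule ccontr)
  assume "i \<noteq> j"
  then have "Suc i \<le> j \<or> Suc j \<le> i" by linarith
  then show False
    using assms monoD[OF assms(1), of "Suc i" j] monoD[OF assms(1), of "Suc j" i] by auto
qed

lemma uniform_grid_cell: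
  fixes t s :: real and m :: nat
  assumes m: "0 < m" and s: "0 < s" "s \<le> t"
  shows "\<exists>i<m. real i * t / real m < s \<and> s \<le> real (Suc i) * t / real m"
proof -
  define i where "i = nat \<lceil>s * m / t\<rceil> - 1"
  have t: "0 < t" using s by simp
  have "0 < s * m / t" using s t m by simp
  then have ceil_pos: "1 \<le> \<lceil>s * m / t\<rceil>" by linarith
  have "s * m / t \<le> m" using s t m by (simp add: field_simps)
  then have "\<lceil>s * m / t\<rceil> \<le> int m" by (simp add: ceiling_le_iff)
  then have "i < m" unfolding i_def using m ceil_pos by linarith
  moreover have "\<lceil>s * m / t\<rceil> = int i + 1"
    using ceil_pos unfolding i_def by linarith
  then have "real i < s * m / t \<and> s * m / t \<le> real i + 1"
    by (simp add: ceiling_eq_iff)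
  then have "real i * t / real m < s \<and> s \<le> real (Suc i) * t / real m"
    using t m by (simp add: field_simps)
  ultimately show ?thesis by blast
qed

lemma uniform_step_approximation_tendsto:
  fixes h :: "real \<Rightarrow> real"
  assumes h: "continuous_on UNIV h" and s: "0 < s" "s \<le> t"
  shows "(\<lambda>k. \<Prod>i<Suc k. if real i * t / real (Suc k) < s \<and> s \<le> real (Suc i) * t / real (Suc k)
      then h (real (Suc i) * t / real (Suc k)) else 1) \<longlonglongrightarrow> h s"
proof -
  define \<tau> where "\<tau> k i = real i * t / real (Suc k)" for k i
  have "\<exists>u. (\<Prod>i<Suc k. if \<tau> k i < s \<and> s \<le> \<tau> k (Suc i) then h (\<tau> k (Suc i)) else 1) = h u
      \<and> s \<le> u \<and> u \<le> s + t / real (Suc k)" for k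
  proof -
    obtain l where l: "l < Suc k" "\<tau> k l < s" "s \<le> \<tau> k (Suc l)"
      using uniform_grid_cell[of "Suc k" s t] s unfolding \<tau>_def by auto
    have "mono (\<tau> k)" using s by (auto simp: \<tau>_def mono_def intro!: divide_right_mono mult_right_mono)
    with l have "(\<tau> k j < s \<and> s \<le> \<tau> k (Suc j)) \<longleftrightarrow> j = l" for j
      using mono_cell_unique by blast
    then have "(\<Prod>i<Suc k. if \<tau> k i < s \<and> s \<le> \<tau> k (Suc i) then h (\<tau> k (Suc i)) else 1) = h (\<tau> k (Suc l))"
      using l(1) by simp
    moreover have "\<tau> k (Suc l) = \<tau> k l + t / real (Suc k)"
      by (simp add: \<tau>_def add_divide_distrib distrib_right)
    ultimately show ?thesis using l by (intro exI[of _ "\<tau> k (Suc l)"]) auto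
  qed
  then obtain u where u: "\<And>k. (\<Prod>i<Suc k. if \<tau> k i < s \<and> s \<le> \<tau> k (Suc i) then h (\<tau> k (Suc i)) else 1) = h (u k)"
    "\<And>k. s \<le> u k" "\<And>k. u k \<le> s + t / real (Suc k)"
    by metis
  have "(\<lambda>k. t / real (Suc k)) \<longlonglongrightarrow> 0"
    using tendsto_mult[OF tendsto_const[of t] LIMSEQ_inverse_real_of_nat] by (simp add: divide_inverse)
  then have upper: "(\<lambda>k. s + t / real (Suc k)) \<longlonglongrightarrow> s"
    using tendsto_add[OF tendsto_const[of s]] by fastforce
  have "u \<longlonglongrightarrow> s"
    by (rule tendsto_sandwich[OF _ _ tendsto_const upper]) (use u(2,3) in auto)
  moreover have "isCont h s" using h by (simp add: continuous_on_eq_continuous_at)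
  ultimately show ?thesis unfolding u(1)[unfolded \<tau>_def] by (rule isCont_tendsto_compose[rotated])
qed

locale nhpp_process = prob_space M for M :: "'w measure" +
  fixes lam :: "real \<Rightarrow> real" and T :: "nat \<Rightarrow> 'w \<Rightarrow> ereal"
  assumes nhpp: "nhpp M lam T"
begin

lemma
  shows lam_nonneg: "0 \<le> s \<Longrightarrow> 0 \<le> lam s"
    and lam_set_integrable: "0 \<le> t \<Longrightarrow> set_integrable lborel {0..t} lam"
    and T_measurable[measurable]: "T n \<in> borel_measurable M"
    and T_pos: "\<omega> \<in> space M \<Longrightarrow> 0 < T n \<omega>"
    and finite_arrivals: "\<omega> \<in> space M \<Longrightarrow> finite (arrivals T \<omega> t)"
    and prob_increment: "0 \<le> a \<Longrightarrow> a \<le> b \<Longrightarrow>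
      prob {\<omega>\<in>space M. Acount T \<omega> b - Acount T \<omega> a = k} = poisson_prob (LINT s:{a<..b}|lborel. lam s) k"
    and indep_increments: "0 \<le> \<tau> 0 \<Longrightarrow> mono \<tau> \<Longrightarrow>
      indep_vars (\<lambda>_. count_space UNIV) (\<lambda>i \<omega>. Acount T \<omega> (\<tau> (Suc i)) - Acount T \<omega> (\<tau> i)) {..<m}"
  using nhpp unfolding nhpp_def by auto

lemma arrival_epoch:
  assumes "\<omega> \<in> space M" "n \<in> arrivals T \<omega> t"
  shows "T n \<omega> = ereal (real_of_ereal (T n \<omega>)) \<and> 0 < real_of_ereal (T n \<omega>) \<and> real_of_ereal (T n \<omega>) \<le> t"
proof -
  have "0 < T n \<omega>" "T n \<omega> \<le> ereal t" using assms T_pos by (auto simp: arrivals_def)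
  then show ?thesis by (cases "T n \<omega>") auto
qed

lemma card_arrivals_in_interval:
  assumes \<omega>: "\<omega> \<in> space M" and ab: "0 \<le> a" "a \<le> b" "b \<le> t"
  shows "card {n\<in>arrivals T \<omega> t. a < real_of_ereal (T n \<omega>) \<and> real_of_ereal (T n \<omega>) \<le> b}
       = Acount T \<omega> b - Acount T \<omega> a"
proof -
  have "{n\<in>arrivals T \<omega> t. a < real_of_ereal (T n \<omega>) \<and> real_of_ereal (T n \<omega>) \<le> b}
      = arrivals T \<omega> b - arrivals T \<omega> a"
  proof (intro set_eqI iffI)
    fix n assume n: "n \<in> {n\<in>arrivals T \<omega> t. a < real_of_ereal (T n \<omega>) \<and> real_of_ereal (T n \<omega>) \<le> b}"
    then have "T n \<omega> = ereal (real_of_ereal (T n \<omega>))" using arrival_epoch[OF \<omega>] by blast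
    with n show "n \<in> arrivals T \<omega> b - arrivals T \<omega> a"
      unfolding arrivals_def by (metis (mono_tags, lifting) Diff_iff ereal_less_eq(3) linorder_not_le mem_Collect_eq)
  next
    fix n assume "n \<in> arrivals T \<omega> b - arrivals T \<omega> a"
    then have "T n \<omega> \<le> ereal b" "\<not> T n \<omega> \<le> ereal a" "0 < T n \<omega>"
      using T_pos[OF \<omega>] unfolding arrivals_def by auto
    with ab show "n \<in> {n\<in>arrivals T \<omega> t. a < real_of_ereal (T n \<omega>) \<and> real_of_ereal (T n \<omega>) \<le> b}"
      unfolding arrivals_def by (cases "T n \<omega>") auto
  qed
  moreover have "arrivals T \<omega> a \<subseteq> arrivals T \<omega> b"
    using ab unfolding arrivals_def by (auto intro: order_trans)
  ultimately show ?thesis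
    unfolding Acount_def using finite_arrivals[OF \<omega>] by (simp add: card_Diff_subset)
qed

lemma prod_lessThan_eventually_prod_arrivals:
  assumes "\<omega> \<in> space M"
  shows "\<forall>\<^sub>F N in sequentially.
    (\<Prod>n<N. if T n \<omega> \<le> ereal t then f n else (1::'a::comm_monoid_mult)) = (\<Prod>n\<in>arrivals T \<omega> t. f n)"
proof -
  obtain N0 where N0: "arrivals T \<omega> t \<subseteq> {..<N0}"
    using finite_arrivals[OF assms] by (meson finite_nat_iff_bounded)
  have "{n\<in>{..<N}. T n \<omega> \<le> ereal t} = arrivals T \<omega> t" if "N0 \<le> N" for N
    using N0 that by (auto simp: arrivals_def)
  then show ?thesis unfolding eventually_sequentially
    by (intro exI[of _ N0] allI impI) (simp only: prod.inter_filter[OF finite_lessThan, symmetric])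
qed

lemma borel_measurable_prod_arrivals[measurable]:
  assumes [measurable]: "\<And>n. f n \<in> borel_measurable M"
  shows "(\<lambda>\<omega>. \<Prod>n\<in>arrivals T \<omega> t. f n \<omega> :: real) \<in> borel_measurable M"
proof (rule borel_measurable_LIMSEQ_real)
  fix \<omega> assume "\<omega> \<in> space M"
  then show "(\<lambda>N. \<Prod>n<N. if T n \<omega> \<le> ereal t then f n \<omega> else 1) \<longlonglongrightarrow> (\<Prod>n\<in>arrivals T \<omega> t. f n \<omega>)"
    by (rule tendsto_eventually[OF prod_lessThan_eventually_prod_arrivals])
qed measurable

lemma expectation_prod_lessThan_tendsto:
  fixes f :: "nat \<Rightarrow> 'w \<Rightarrow> real"
  assumes [measurable]: "\<And>n. f n \<in> borel_measurable M" and f: "\<And>n \<omega>. 0 \<le> f n \<omega> \<and> f n \<omega> \<le> 1"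
  shows "(\<lambda>N. expectation (\<lambda>\<omega>. \<Prod>n<N. if T n \<omega> \<le> ereal t then f n \<omega> else 1))
    \<longlonglongrightarrow> expectation (\<lambda>\<omega>. \<Prod>n\<in>arrivals T \<omega> t. f n \<omega>)"
proof (rule integral_dominated_convergence[where w="\<lambda>_. 1"])
  show "AE \<omega> in M. (\<lambda>N. \<Prod>n<N. if T n \<omega> \<le> ereal t then f n \<omega> else 1) \<longlonglongrightarrow> (\<Prod>n\<in>arrivals T \<omega> t. f n \<omega>)"
    by (intro AE_I2 tendsto_eventually prod_lessThan_eventually_prod_arrivals)
  show "AE \<omega> in M. norm (\<Prod>n<N. if T n \<omega> \<le> ereal t then f n \<omega> else 1) \<le> 1" for N
    using f by (intro AE_I2) (auto simp: abs_prod intro!: prod_le_1)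
qed auto

definition arrival_prod :: "real \<Rightarrow> (real \<Rightarrow> real) \<Rightarrow> 'w \<Rightarrow> real" where
  "arrival_prod t g \<omega> = (\<Prod>n\<in>arrivals T \<omega> t. g (real_of_ereal (T n \<omega>)))"

definition poisson_pgfl :: "real \<Rightarrow> (real \<Rightarrow> real) \<Rightarrow> bool" where
  "poisson_pgfl t g \<longleftrightarrow> expectation (arrival_prod t g) = exp (- (LINT s:{0..t}|lborel. (1 - g s) * lam s))"

lemma borel_measurable_arrival_prod[measurable]:
  assumes [measurable]: "g \<in> borel_measurable borel"
  shows "arrival_prod t g \<in> borel_measurable M"
  unfolding arrival_prod_def by measurable

lemma arrival_prod_bounds: "(\<And>s. 0 \<le> g s \<and> g s \<le> 1) \<Longrightarrow> 0 \<le> arrival_prod t g \<omega> \<and> arrival_prod t g \<omega> \<le> 1"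
  unfolding arrival_prod_def by (auto intro!: prod_nonneg prod_le_1)

lemma arrival_prod_step_function:
  assumes \<omega>: "\<omega> \<in> space M" and \<tau>: "0 \<le> \<tau> 0" "mono \<tau>" "\<tau> m \<le> t"
  shows "arrival_prod t (\<lambda>s. \<Prod>i<m. if \<tau> i < s \<and> s \<le> \<tau> (Suc i) then c i else 1) \<omega>
       = (\<Prod>i<m. c i ^ (Acount T \<omega> (\<tau> (Suc i)) - Acount T \<omega> (\<tau> i)))"
proof -
  have \<tau>_nonneg: "0 \<le> \<tau> i" for i using \<tau>(1) monoD[OF \<tau>(2), of 0 i] by simp
  have \<tau>_le: "\<tau> (Suc i) \<le> t" if "i < m" for i using \<tau>(3) monoD[OF \<tau>(2), of "Suc i" m] that by simp
  have "arrival_prod t (\<lambda>s. \<Prod>i<m. if \<tau> i < s \<and> s \<le> \<tau> (Suc i) then c i else 1) \<omega>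
      = (\<Prod>i<m. \<Prod>n\<in>arrivals T \<omega> t.
           if \<tau> i < real_of_ereal (T n \<omega>) \<and> real_of_ereal (T n \<omega>) \<le> \<tau> (Suc i) then c i else 1)"
    unfolding arrival_prod_def by (rule prod.swap)
  also have "\<dots> = (\<Prod>i<m. c i ^ card {n\<in>arrivals T \<omega> t.
           \<tau> i < real_of_ereal (T n \<omega>) \<and> real_of_ereal (T n \<omega>) \<le> \<tau> (Suc i)})"
    by (intro prod.cong refl) (simp add: prod.inter_filter[OF finite_arrivals[OF \<omega>], symmetric])
  also have "\<dots> = (\<Prod>i<m. c i ^ (Acount T \<omega> (\<tau> (Suc i)) - Acount T \<omega> (\<tau> i)))"
    by (intro prod.cong refl)
      (simp add: card_arrivals_in_interval[OF \<omega> \<tau>_nonneg monoD[OF \<tau>(2)] \<tau>_le])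
  finally show ?thesis .
qed

lemma expectation_prod_pow_increments:
  assumes \<tau>: "0 \<le> \<tau> 0" "mono \<tau>" and c: "\<And>i. 0 \<le> c i"
  shows "expectation (\<lambda>\<omega>. \<Prod>i<m. c i ^ (Acount T \<omega> (\<tau> (Suc i)) - Acount T \<omega> (\<tau> i)))
       = exp (- (\<Sum>i<m. (1 - c i) * (LINT s:{\<tau> i<..\<tau> (Suc i)}|lborel. lam s)))"
proof -
  define X where "X i \<omega> = Acount T \<omega> (\<tau> (Suc i)) - Acount T \<omega> (\<tau> i)" for i \<omega>
  define L where "L i = (LINT s:{\<tau> i<..\<tau> (Suc i)}|lborel. lam s)" for i
  have \<tau>_nonneg: "0 \<le> \<tau> i" for i using \<tau>(1) monoD[OF \<tau>(2), of 0 i] by simp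
  have indep: "indep_vars (\<lambda>_. count_space UNIV) X {..<m}"
    unfolding X_def using \<tau> by (rule indep_increments)
  then have [measurable]: "X i \<in> M \<rightarrow>\<^sub>M count_space UNIV" if "i < m" for i
    using that unfolding indep_vars_def by auto
  have pgf: "has_bochner_integral M (\<lambda>\<omega>. c i ^ X i \<omega>) (exp (- ((1 - c i) * L i)))" if "i < m" for i
  proof (rule has_bochner_integral_nat_valued)
    show "prob {\<omega> \<in> space M. X i \<omega> = k} = poisson_prob (L i) k" for k
      unfolding X_def L_def by (rule prob_increment) (simp_all add: \<tau>_nonneg monoD[OF \<tau>(2)])
  qed (use that c poisson_prob_pgf in auto)
  have "expectation (\<lambda>\<omega>. \<Prod>i<m. c i ^ X i \<omega>) = (\<Prod>i<m. expectation (\<lambda>\<omega>. c i ^ X i \<omega>))"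
  proof (rule indep_vars_lebesgue_integral)
    show "indep_vars (\<lambda>_. borel) (\<lambda>i \<omega>. c i ^ X i \<omega>) {..<m}"
      by (rule indep_vars_compose2[OF indep, where Y="\<lambda>i k. c i ^ k"]) simp
  qed (use pgf in \<open>auto simp: has_bochner_integral_iff\<close>)
  also have "\<dots> = (\<Prod>i<m. exp (- ((1 - c i) * L i)))"
    by (intro prod.cong refl) (use pgf in \<open>auto intro: has_bochner_integral_integral_eq\<close>)
  also have "\<dots> = exp (- (\<Sum>i<m. (1 - c i) * L i))"
    by (simp add: exp_sum[symmetric] sum_negf)
  finally show ?thesis unfolding X_def L_def .
qed

lemma integral_step_function:
  assumes \<tau>: "0 \<le> \<tau> 0" "mono \<tau>" "\<tau> m \<le> t"
  shows "(LINT s:{0..t}|lborel. (1 - (\<Prod>i<m. if \<tau> i < s \<and> s \<le> \<tau> (Suc i) then c i else 1)) * lam s)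
       = (\<Sum>i<m. (1 - c i) * (LINT s:{\<tau> i<..\<tau> (Suc i)}|lborel. lam s))"
proof -
  have \<tau>_nonneg: "0 \<le> \<tau> i" for i using \<tau>(1) monoD[OF \<tau>(2), of 0 i] by simp
  have \<tau>_le: "\<tau> (Suc i) \<le> t" if "i < m" for i using \<tau>(3) monoD[OF \<tau>(2), of "Suc i" m] that by simp
  have pointwise: "indicator {0..t} s * ((1 - (\<Prod>i<m. if \<tau> i < s \<and> s \<le> \<tau> (Suc i) then c i else 1)) * lam s)
      = (\<Sum>i<m. (1 - c i) * (indicator {\<tau> i<..\<tau> (Suc i)} s * lam s))" for s
  proof (cases "\<exists>i<m. \<tau> i < s \<and> s \<le> \<tau> (Suc i)")
    case True
    then obtain i0 where i0: "i0 < m" "\<tau> i0 < s" "s \<le> \<tau> (Suc i0)" by blast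
    then have cell: "(\<tau> i < s \<and> s \<le> \<tau> (Suc i)) \<longleftrightarrow> i = i0" for i
      using mono_cell_unique[OF \<tau>(2)] by blast
    have "s \<in> {0..t}" using i0 \<tau>_nonneg[of i0] \<tau>_le[of i0] by auto
    moreover have "(\<Sum>i<m. (1 - c i) * (indicator {\<tau> i<..\<tau> (Suc i)} s * lam s))
        = (\<Sum>i<m. if i = i0 then (1 - c i) * lam s else 0)"
      by (intro sum.cong refl) (simp add: indicator_def cell)
    ultimately show ?thesis using i0(1) by (simp add: cell)
  next
    case False
    then have "indicator {\<tau> i<..\<tau> (Suc i)} s = (0::real)" if "i < m" for i
      using that by (auto simp: indicator_def)
    moreover have "(\<Prod>i<m. if \<tau> i < s \<and> s \<le> \<tau> (Suc i) then c i else 1) = 1"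
      using False by (intro prod.neutral) auto
    ultimately show ?thesis by simp
  qed
  have "set_integrable lborel {\<tau> i<..\<tau> (Suc i)} lam" for i
    by (rule set_integrable_subset[OF lam_set_integrable[of "\<tau> (Suc i)"]])
      (use \<tau>_nonneg[of i] \<tau>_nonneg[of "Suc i"] in auto)
  then have "integrable lborel (\<lambda>s. indicator {\<tau> i<..\<tau> (Suc i)} s * lam s)" for i
    by (simp add: set_integrable_def)
  then show ?thesis
    unfolding set_lebesgue_integral_def by (simp add: pointwise Bochner_Integration.integral_sum)
qed

lemma poisson_pgfl_step_function:
  assumes \<tau>: "0 \<le> \<tau> 0" "mono \<tau>" "\<tau> m \<le> t" and c: "\<And>i. 0 \<le> c i"
  shows "poisson_pgfl t (\<lambda>s. \<Prod>i<m. if \<tau> i < s \<and> s \<le> \<tau> (Suc i) then c i else 1)"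
  unfolding poisson_pgfl_def integral_step_function[OF \<tau>]
    expectation_prod_pow_increments[OF \<tau>(1,2) c, symmetric]
  by (intro Bochner_Integration.integral_cong refl arrival_prod_step_function \<tau>)

lemma expectation_arrival_prod_tendsto:
  assumes G[measurable]: "\<And>k. G k \<in> borel_measurable borel"
    and G_bounds: "\<And>k s. 0 \<le> G k s \<and> G k s \<le> 1"
    and g[measurable]: "g \<in> borel_measurable borel"
    and conv: "\<And>s. 0 < s \<Longrightarrow> s \<le> t \<Longrightarrow> (\<lambda>k. G k s) \<longlonglongrightarrow> g s"
  shows "(\<lambda>k. expectation (arrival_prod t (G k))) \<longlonglongrightarrow> expectation (arrival_prod t g)"
proof (rule integral_dominated_convergence[where w="\<lambda>_. 1"])
  show "AE \<omega> in M. (\<lambda>k. arrival_prod t (G k) \<omega>) \<longlonglongrightarrow> arrival_prod t g \<omega>"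
  proof (rule AE_I2)
    fix \<omega> assume "\<omega> \<in> space M"
    then show "(\<lambda>k. arrival_prod t (G k) \<omega>) \<longlonglongrightarrow> arrival_prod t g \<omega>"
      unfolding arrival_prod_def by (intro tendsto_prod conv) (auto dest: arrival_epoch)
  qed
  show "AE \<omega> in M. norm (arrival_prod t (G k) \<omega>) \<le> 1" for k
    using arrival_prod_bounds[of "G k" t] G_bounds by auto
qed auto

lemma pgfl_exponent_tendsto:
  assumes t: "0 \<le> t"
    and G[measurable]: "\<And>k. G k \<in> borel_measurable borel"
    and G_bounds: "\<And>k s. 0 \<le> G k s \<and> G k s \<le> 1"
    and g[measurable]: "g \<in> borel_measurable borel"
    and conv: "\<And>s. 0 < s \<Longrightarrow> s \<le> t \<Longrightarrow> (\<lambda>k. G k s) \<longlonglongrightarrow> g s"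
  shows "(\<lambda>k. LINT s:{0..t}|lborel. (1 - G k s) * lam s) \<longlonglongrightarrow> (LINT s:{0..t}|lborel. (1 - g s) * lam s)"
  unfolding set_lebesgue_integral_def
proof (rule integral_dominated_convergence[where w="\<lambda>s. indicator {0..t} s * lam s"])
  show "integrable lborel (\<lambda>s. indicator {0..t} s * lam s)"
    using lam_set_integrable[OF t] by (simp add: set_integrable_def)
  then have [measurable]: "(\<lambda>s. indicator {0..t} s * lam s) \<in> borel_measurable borel"
    by (auto dest: borel_measurable_integrable)
  have "(\<lambda>s. indicator {0..t} s *\<^sub>R ((1 - f s) * lam s)) = (\<lambda>s. (1 - f s) * (indicator {0..t} s * lam s))"
    for f :: "real \<Rightarrow> real"
    by (auto simp: fun_eq_iff)
  then show "(\<lambda>s. indicator {0..t} s *\<^sub>R ((1 - g s) * lam s)) \<in> borel_measurable lborel"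
    "(\<lambda>s. indicator {0..t} s *\<^sub>R ((1 - G k s) * lam s)) \<in> borel_measurable lborel" for k
    by (simp_all add: measurable_lborel2)
  show "AE s in lborel. (\<lambda>k. indicator {0..t} s *\<^sub>R ((1 - G k s) * lam s))
      \<longlonglongrightarrow> indicator {0..t} s *\<^sub>R ((1 - g s) * lam s)"
    using AE_lborel_singleton[of 0]
  proof (rule AE_mp, intro AE_I2 impI)
    fix s :: real assume "s \<noteq> 0"
    then show "(\<lambda>k. indicator {0..t} s *\<^sub>R ((1 - G k s) * lam s)) \<longlonglongrightarrow> indicator {0..t} s *\<^sub>R ((1 - g s) * lam s)"
      by (cases "s \<in> {0..t}") (auto intro!: tendsto_intros conv)
  qed
  show "AE s in lborel. norm (indicator {0..t} s *\<^sub>R ((1 - G k s) * lam s)) \<le> indicator {0..t} s * lam s" for k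
  proof (rule AE_I2)
    fix s :: real
    have "\<bar>1 - G k s\<bar> \<le> 1" using G_bounds[of k s] by auto
    then show "norm (indicator {0..t} s *\<^sub>R ((1 - G k s) * lam s)) \<le> indicator {0..t} s * lam s"
      using lam_nonneg[of s] by (cases "s \<in> {0..t}") (auto simp: abs_mult mult_left_le_one_le)
  qed
qed

lemma poisson_pgfl_limit:
  assumes t: "0 \<le> t" and pgfl: "\<And>k. poisson_pgfl t (G k)"
    and G: "\<And>k. G k \<in> borel_measurable borel" "\<And>k s. 0 \<le> G k s \<and> G k s \<le> 1"
    and g: "g \<in> borel_measurable borel"
    and conv: "\<And>s. 0 < s \<Longrightarrow> s \<le> t \<Longrightarrow> (\<lambda>k. G k s) \<longlonglongrightarrow> g s"
  shows "poisson_pgfl t g"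
proof -
  have "(\<lambda>k. expectation (arrival_prod t (G k))) \<longlonglongrightarrow> exp (- (LINT s:{0..t}|lborel. (1 - g s) * lam s))"
    using pgfl tendsto_exp[OF tendsto_minus[OF pgfl_exponent_tendsto[OF t G g conv]]]
    by (simp add: poisson_pgfl_def)
  then show ?thesis
    unfolding poisson_pgfl_def using LIMSEQ_unique expectation_arrival_prod_tendsto[OF G g conv] by blast
qed

lemma poisson_pgfl_continuous:
  assumes t: "0 \<le> t" and h: "continuous_on UNIV h" "\<And>s. 0 \<le> h s \<and> h s \<le> 1"
  shows "poisson_pgfl t h"
proof -
  define \<tau> where "\<tau> k i = real i * t / real (Suc k)" for k i
  define G where "G k s = (\<Prod>i<Suc k. if \<tau> k i < s \<and> s \<le> \<tau> k (Suc i) then h (\<tau> k (Suc i)) else 1)" for k s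
  have \<tau>: "0 \<le> \<tau> k 0" "mono (\<tau> k)" "\<tau> k (Suc k) \<le> t" for k
    using t by (auto simp: \<tau>_def mono_def intro!: divide_right_mono mult_right_mono)
  have [measurable]: "h \<in> borel_measurable borel" using h(1) by (rule borel_measurable_continuous_onI)
  show ?thesis
  proof (rule poisson_pgfl_limit[OF t])
    show "poisson_pgfl t (G k)" for k
      unfolding G_def using h(2) by (intro poisson_pgfl_step_function \<tau>) auto
    show "G k \<in> borel_measurable borel" for k unfolding G_def by measurable
    show "0 \<le> G k s \<and> G k s \<le> 1" for k s
      unfolding G_def using h(2) by (intro conjI prod_nonneg prod_le_1) auto
    show "(\<lambda>k. G k s) \<longlonglongrightarrow> h s" if "0 < s" "s \<le> t" for s
      unfolding G_def \<tau>_def using h(1) that by (rule uniform_step_approximation_tendsto)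
  qed measurable
qed

(* Clipping to [0, 1] keeps every approximant admissible for poisson_pgfl_limit. *)
lemma poisson_pgfl_baire:
  assumes t: "0 \<le> t" and f: "baire f"
  shows "poisson_pgfl t (\<lambda>s. max 0 (min 1 (f s)))"
  using f
proof induct
  case (baire_continuous f)
  then show ?case by (intro poisson_pgfl_continuous t) (auto intro!: continuous_intros)
next
  case (baire_limit F f)
  have [measurable]: "F k \<in> borel_measurable borel" "f \<in> borel_measurable borel" for k
    using baire_limit(1) baire.baire_limit[OF baire_limit(1,3)] by (auto intro: baire_measurable)
  show ?case
  proof (rule poisson_pgfl_limit[OF t baire_limit(2)])
    show "(\<lambda>k. max 0 (min 1 (F k s))) \<longlonglongrightarrow> max 0 (min 1 (f s))" for s
      by (intro tendsto_intros baire_limit(3))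
  qed auto
qed

lemma poisson_pgfl_borel:
  assumes "0 \<le> t" "g \<in> borel_measurable borel" "\<And>s. 0 \<le> g s \<and> g s \<le> 1"
  shows "poisson_pgfl t g"
proof -
  have "(\<lambda>s. max 0 (min 1 (g s))) = g" using assms(3) by (auto simp: fun_eq_iff)
  then show ?thesis
    using poisson_pgfl_baire[OF assms(1) baire_if_borel_measurable[OF assms(2)]] by simp
qed

end

section \<open>Conditioning on the arrival epochs\<close>

lemma pair_measure_eqI_rectangles:
  assumes sets: "sets P = sets (A \<Otimes>\<^sub>M B)" "sets Q = sets (A \<Otimes>\<^sub>M B)"
    and finite: "emeasure P (space A \<times> space B) \<noteq> \<infinity>"
    and eq: "\<And>C E. C \<in> sets A \<Longrightarrow> E \<in> sets B \<Longrightarrow> emeasure P (C \<times> E) = emeasure Q (C \<times> E)"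
  shows "P = Q"
proof (rule measure_eqI_generator_eq[OF Int_stable_pair_measure_generator pair_measure_closed])
  show "sets P = sigma_sets (space A \<times> space B) {C \<times> E |C E. C \<in> sets A \<and> E \<in> sets B}"
    "sets Q = sigma_sets (space A \<times> space B) {C \<times> E |C E. C \<in> sets A \<and> E \<in> sets B}"
    using sets by (simp_all add: sets_pair_measure)
qed (use eq finite in auto)

context prob_space
begin

context
  fixes X :: "'a \<Rightarrow> 'b" and Z :: "'a \<Rightarrow> 'c" and \<kappa> :: "'a \<Rightarrow> 'c measure"
    and A :: "'b measure" and B :: "'c measure" and w w' :: "'a \<Rightarrow> ennreal"
  assumes X[measurable]: "X \<in> M \<rightarrow>\<^sub>M A" and Z[measurable]: "Z \<in> M \<rightarrow>\<^sub>M B"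
    and \<kappa>[measurable]: "\<kappa> \<in> M \<rightarrow>\<^sub>M subprob_algebra B"
    and w[measurable]: "w \<in> borel_measurable M" "w' \<in> borel_measurable M"
    and w_le_1: "\<And>\<omega>. w \<omega> \<le> 1"
    and rectangles: "\<And>C E. C \<in> sets A \<Longrightarrow> E \<in> sets B \<Longrightarrow>
      (\<integral>\<^sup>+\<omega>. w \<omega> * indicator (C \<times> E) (X \<omega>, Z \<omega>) \<partial>M)
        = (\<integral>\<^sup>+\<omega>. w' \<omega> * (indicator C (X \<omega>) * emeasure (\<kappa> \<omega>) E) \<partial>M)"
begin

lemma measurable_distr_Pair_kernel[measurable]:
  "(\<lambda>\<omega>. distr (\<kappa> \<omega>) (A \<Otimes>\<^sub>M B) (\<lambda>y. (X \<omega>, y))) \<in> M \<rightarrow>\<^sub>M subprob_algebra (A \<Otimes>\<^sub>M B)"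
  by (rule measurable_distr2[OF _ \<kappa>]) measurable

lemma emeasure_distr_Pair_kernel:
  assumes \<omega>: "\<omega> \<in> space M" and CE: "C \<in> sets A" "E \<in> sets B"
  shows "emeasure (distr (\<kappa> \<omega>) (A \<Otimes>\<^sub>M B) (\<lambda>y. (X \<omega>, y))) (C \<times> E) = indicator C (X \<omega>) * emeasure (\<kappa> \<omega>) E"
proof -
  have "emeasure (distr (\<kappa> \<omega>) (A \<Otimes>\<^sub>M B) (\<lambda>y. (X \<omega>, y))) (C \<times> E)
      = emeasure (\<kappa> \<omega>) ((\<lambda>y. (X \<omega>, y)) -` (C \<times> E) \<inter> space (\<kappa> \<omega>))"
    using \<omega> CE measurable_space[OF X \<omega>] by (subst emeasure_distr) (auto simp: sets_kernel[OF \<kappa>])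
  also have "\<dots> = indicator C (X \<omega>) * emeasure (\<kappa> \<omega>) E"
    using sets.sets_into_space[OF CE(2)] sets_eq_imp_space_eq[OF sets_kernel[OF \<kappa> \<omega>]]
    by (cases "X \<omega> \<in> C") (auto simp: Int_absorb2)
  finally show ?thesis .
qed

lemma distr_Pair_density_eq_bind_kernel:
  "distr (density M w) (A \<Otimes>\<^sub>M B) (\<lambda>\<omega>. (X \<omega>, Z \<omega>))
    = density M w' \<bind> (\<lambda>\<omega>. distr (\<kappa> \<omega>) (A \<Otimes>\<^sub>M B) (\<lambda>y. (X \<omega>, y)))"
proof (rule pair_measure_eqI_rectangles)
  have nonempty: "space (density M w') \<noteq> {}" using not_empty by simp
  then show "sets (density M w' \<bind> (\<lambda>\<omega>. distr (\<kappa> \<omega>) (A \<Otimes>\<^sub>M B) (\<lambda>y. (X \<omega>, y)))) = sets (A \<Otimes>\<^sub>M B)"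
    by (subst sets_bind) auto
  have "(\<lambda>\<omega>. (X \<omega>, Z \<omega>)) -` (space A \<times> space B) \<inter> space M = space M"
    using measurable_space[OF X] measurable_space[OF Z] by auto
  then have "emeasure (distr (density M w) (A \<Otimes>\<^sub>M B) (\<lambda>\<omega>. (X \<omega>, Z \<omega>))) (space A \<times> space B)
      = (\<integral>\<^sup>+\<omega>. w \<omega> * indicator (space M) \<omega> \<partial>M)"
    by (subst emeasure_distr) (auto simp: emeasure_density space_pair_measure[symmetric])
  also have "\<dots> \<le> (\<integral>\<^sup>+\<omega>. 1 \<partial>M)" using w_le_1 by (intro nn_integral_mono) (auto simp: indicator_def)
  finally show "emeasure (distr (density M w) (A \<Otimes>\<^sub>M B) (\<lambda>\<omega>. (X \<omega>, Z \<omega>))) (space A \<times> space B) \<noteq> \<infinity>"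
    using emeasure_space_1 by (auto simp: top_unique)
  fix C E assume CE[measurable]: "C \<in> sets A" "E \<in> sets B"
  have "emeasure (distr (density M w) (A \<Otimes>\<^sub>M B) (\<lambda>\<omega>. (X \<omega>, Z \<omega>))) (C \<times> E)
      = (\<integral>\<^sup>+\<omega>. w \<omega> * indicator (C \<times> E) (X \<omega>, Z \<omega>) \<partial>M)"
    by (subst emeasure_distr, simp_all add: emeasure_density)
      (intro nn_integral_cong, auto simp: indicator_def)
  also have "\<dots> = (\<integral>\<^sup>+\<omega>. w' \<omega> * emeasure (distr (\<kappa> \<omega>) (A \<Otimes>\<^sub>M B) (\<lambda>y. (X \<omega>, y))) (C \<times> E) \<partial>M)"
    unfolding rectangles[OF CE] by (intro nn_integral_cong) (simp add: emeasure_distr_Pair_kernel CE)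
  also have "\<dots> = emeasure (density M w' \<bind> (\<lambda>\<omega>. distr (\<kappa> \<omega>) (A \<Otimes>\<^sub>M B) (\<lambda>y. (X \<omega>, y)))) (C \<times> E)"
    using nonempty by (simp add: emeasure_bind[where N="A \<Otimes>\<^sub>M B"] nn_integral_density)
  finally show "emeasure (distr (density M w) (A \<Otimes>\<^sub>M B) (\<lambda>\<omega>. (X \<omega>, Z \<omega>))) (C \<times> E)
      = emeasure (density M w' \<bind> (\<lambda>\<omega>. distr (\<kappa> \<omega>) (A \<Otimes>\<^sub>M B) (\<lambda>y. (X \<omega>, y)))) (C \<times> E)" .
qed simp

lemma nn_integral_Pair_eq_kernel:
  assumes f[measurable]: "f \<in> borel_measurable (A \<Otimes>\<^sub>M B)"
  shows "(\<integral>\<^sup>+\<omega>. w \<omega> * f (X \<omega>, Z \<omega>) \<partial>M) = (\<integral>\<^sup>+\<omega>. w' \<omega> * (\<integral>\<^sup>+y. f (X \<omega>, y) \<partial>\<kappa> \<omega>) \<partial>M)"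
proof -
  have "(\<integral>\<^sup>+\<omega>. w \<omega> * f (X \<omega>, Z \<omega>) \<partial>M) = (\<integral>\<^sup>+p. f p \<partial>distr (density M w) (A \<Otimes>\<^sub>M B) (\<lambda>\<omega>. (X \<omega>, Z \<omega>)))"
    by (simp add: nn_integral_distr nn_integral_density)
  also have "\<dots> = (\<integral>\<^sup>+\<omega>. \<integral>\<^sup>+p. f p \<partial>distr (\<kappa> \<omega>) (A \<Otimes>\<^sub>M B) (\<lambda>y. (X \<omega>, y)) \<partial>density M w')"
    unfolding distr_Pair_density_eq_bind_kernel by (rule nn_integral_bind[OF f]) simp
  also have "\<dots> = (\<integral>\<^sup>+\<omega>. w' \<omega> * (\<integral>\<^sup>+y. f (X \<omega>, y) \<partial>\<kappa> \<omega>) \<partial>M)"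
  proof (subst nn_integral_density)
    show "(\<lambda>\<omega>. \<integral>\<^sup>+p. f p \<partial>distr (\<kappa> \<omega>) (A \<Otimes>\<^sub>M B) (\<lambda>y. (X \<omega>, y))) \<in> borel_measurable M"
      by (rule nn_integral_measurable_subprob_algebra2[where N="A \<Otimes>\<^sub>M B"]) measurable
    show "(\<integral>\<^sup>+\<omega>. w' \<omega> * (\<integral>\<^sup>+p. f p \<partial>distr (\<kappa> \<omega>) (A \<Otimes>\<^sub>M B) (\<lambda>y. (X \<omega>, y))) \<partial>M)
        = (\<integral>\<^sup>+\<omega>. w' \<omega> * (\<integral>\<^sup>+y. f (X \<omega>, y) \<partial>\<kappa> \<omega>) \<partial>M)"
      using measurable_space[OF X]
      by (intro nn_integral_cong) (simp add: nn_integral_distr measurable_cong_sets[OF sets_kernel[OF \<kappa>] refl])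
  qed simp
  finally show ?thesis .
qed

end

end

definition bounded_tests :: "((nat \<Rightarrow> ereal) \<times> (nat \<times> (nat \<Rightarrow> real)) \<Rightarrow> ennreal) set" where
  "bounded_tests = {f \<in> borel_measurable (timesM \<Otimes>\<^sub>M markM). \<forall>x. f x \<le> 1}"

definition rectangle_tests :: "((nat \<Rightarrow> ereal) \<times> (nat \<times> (nat \<Rightarrow> real)) \<Rightarrow> ennreal) set" where
  "rectangle_tests = {indicator (C \<times> E) | C E. C \<in> sets timesM \<and> E \<in> sets markM}"

lemma rectangle_tests_subset_bounded_tests: "rectangle_tests \<subseteq> bounded_tests"
  unfolding rectangle_tests_def bounded_tests_def by (auto simp: indicator_def)

locale marked_process = prob_space M for M :: "'w measure" +
  fixes K :: "real \<Rightarrow> (nat \<times> (nat \<Rightarrow> real)) measure"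
    and T :: "nat \<Rightarrow> 'w \<Rightarrow> ereal" and Y :: "nat \<Rightarrow> 'w \<Rightarrow> nat \<times> (nat \<Rightarrow> real)"
  assumes marked: "marked_by M K T Y" and kernel: "batch_kernel K"
    and epoch_measurable[measurable]: "\<And>n. T n \<in> borel_measurable M"
begin

abbreviation epochs :: "'w \<Rightarrow> nat \<Rightarrow> ereal" where
  "epochs \<omega> \<equiv> (\<lambda>k. T k \<omega>)"

abbreviation batch_law :: "nat \<Rightarrow> 'w \<Rightarrow> (nat \<times> (nat \<Rightarrow> real)) measure" where
  "batch_law n \<omega> \<equiv> K (real_of_ereal (T n \<omega>))"

lemma Y_measurable[measurable]: "Y n \<in> M \<rightarrow>\<^sub>M markM"
  using marked unfolding marked_by_def by auto

lemma epochs_measurable[measurable]: "epochs \<in> M \<rightarrow>\<^sub>M timesM"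
  unfolding timesM_def by (rule measurable_PiM_single') auto

lemma K_measurable: "K \<in> borel \<rightarrow>\<^sub>M subprob_algebra markM"
  using kernel unfolding batch_kernel_def by (auto intro: measurable_prob_algebraD)

lemma K_in_prob_algebra: "K s \<in> space (prob_algebra markM)"
  using kernel unfolding batch_kernel_def by (auto dest: measurable_space)

lemma sets_K[simp]: "sets (K s) = sets markM"
  using K_in_prob_algebra[of s] by (simp add: space_prob_algebra)

lemma prob_space_K: "prob_space (K s)"
  using K_in_prob_algebra[of s] by (simp add: space_prob_algebra)

lemma batch_law_measurable[measurable]: "batch_law n \<in> M \<rightarrow>\<^sub>M subprob_algebra markM"
  by (rule measurable_compose[OF _ K_measurable]) measurable

lemma nn_integral_indicator_rectangle:
  assumes "E \<in> sets markM"
  shows "(\<integral>\<^sup>+y. indicator (C \<times> E) (a, y) \<partial>K s) = indicator C a * emeasure (K s) E"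
proof -
  have "(\<integral>\<^sup>+y. indicator (C \<times> E) (a, y) \<partial>K s) = (\<integral>\<^sup>+y. indicator C a * indicator E y \<partial>K s)"
    by (intro nn_integral_cong) (auto simp: indicator_def)
  also have "\<dots> = indicator C a * emeasure (K s) E"
    using assms by (subst nn_integral_cmult_indicator) auto
  finally show ?thesis .
qed

lemma measurable_kernel_test[measurable]:
  assumes [measurable]: "f \<in> borel_measurable (timesM \<Otimes>\<^sub>M markM)"
  shows "(\<lambda>\<omega>. \<integral>\<^sup>+y. f (epochs \<omega>, y) \<partial>batch_law n \<omega>) \<in> borel_measurable M"
  by (rule nn_integral_measurable_subprob_algebra2[OF _ batch_law_measurable]) measurable

definition marks_integral :: "nat \<Rightarrow> (nat \<Rightarrow> (nat \<Rightarrow> ereal) \<times> (nat \<times> (nat \<Rightarrow> real)) \<Rightarrow> ennreal) \<Rightarrow> ennreal"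
  where "marks_integral N F = (\<integral>\<^sup>+\<omega>. (\<Prod>n<N. F n (epochs \<omega>, Y n \<omega>)) \<partial>M)"

definition kernel_integral :: "nat \<Rightarrow> (nat \<Rightarrow> (nat \<Rightarrow> ereal) \<times> (nat \<times> (nat \<Rightarrow> real)) \<Rightarrow> ennreal) \<Rightarrow> ennreal"
  where "kernel_integral N F = (\<integral>\<^sup>+\<omega>. (\<Prod>n<N. \<integral>\<^sup>+y. F n (epochs \<omega>, y) \<partial>batch_law n \<omega>) \<partial>M)"

lemma sets_epochs_marks_event:
  assumes C: "C \<in> sets timesM" and E: "\<And>i. i < N \<Longrightarrow> E i \<in> sets markM"
  shows "{\<omega>\<in>space M. epochs \<omega> \<in> C \<and> (\<forall>i<N. Y i \<omega> \<in> E i)} \<in> sets M"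
proof -
  have "{\<omega>\<in>space M. Y i \<omega> \<in> E i} \<in> sets M" if "i \<in> {..<N}" for i
  proof -
    have "{\<omega>\<in>space M. Y i \<omega> \<in> E i} = Y i -` E i \<inter> space M" by blast
    then show ?thesis using measurable_sets[OF Y_measurable E] that by simp
  qed
  then have "{\<omega>\<in>space M. \<forall>i\<in>{..<N}. Y i \<omega> \<in> E i} \<in> sets M"
    by (intro sets.sets_Collect_finite_All) auto
  moreover have "{\<omega>\<in>space M. epochs \<omega> \<in> C} \<in> sets M" using C by measurable
  ultimately have "{\<omega>\<in>space M. \<forall>i\<in>{..<N}. Y i \<omega> \<in> E i} \<inter> {\<omega>\<in>space M. epochs \<omega> \<in> C} \<in> sets M"
    by (rule sets.Int)
  moreover have "{\<omega>\<in>space M. \<forall>i\<in>{..<N}. Y i \<omega> \<in> E i} \<inter> {\<omega>\<in>space M. epochs \<omega> \<in> C}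
      = {\<omega>\<in>space M. epochs \<omega> \<in> C \<and> (\<forall>i<N. Y i \<omega> \<in> E i)}" by auto
  ultimately show ?thesis by simp
qed

lemma marks_integral_eq_kernel_integral_rectangles:
  assumes "\<And>n. n < N \<Longrightarrow> F n \<in> rectangle_tests"
  shows "marks_integral N F = kernel_integral N F"
proof -
  have rectangles: "\<forall>n\<in>{..<N}. \<exists>CE. fst CE \<in> sets timesM \<and> snd CE \<in> sets markM \<and> F n = indicator (fst CE \<times> snd CE)"
    using assms unfolding rectangle_tests_def by fastforce
  obtain CE where CE': "\<forall>n\<in>{..<N}. fst (CE n) \<in> sets timesM \<and> snd (CE n) \<in> sets markM
      \<and> F n = indicator (fst (CE n) \<times> snd (CE n))"
    using bchoice[OF rectangles] by blast
  define C where "C n = fst (CE n)" for n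
  define E where "E n = snd (CE n)" for n
  have CE: "\<And>n. n < N \<Longrightarrow> C n \<in> sets timesM \<and> E n \<in> sets markM \<and> F n = indicator (C n \<times> E n)"
    using CE' unfolding C_def E_def by simp
  define C' where "C' = {\<tau>\<in>space timesM. \<forall>n\<in>{..<N}. \<tau> \<in> C n}"
  have C': "C' \<in> sets timesM" unfolding C'_def
    by (rule sets.sets_Collect_finite_All)
      (use CE sets.Int_space_eq2 in \<open>auto simp: Int_def[symmetric] conj_commute\<close>)
  have event: "{\<omega>\<in>space M. epochs \<omega> \<in> C' \<and> (\<forall>i<N. Y i \<omega> \<in> E i)} \<in> sets M"
    using C' CE by (intro sets_epochs_marks_event) auto
  have "marks_integral N F = emeasure M {\<omega>\<in>space M. epochs \<omega> \<in> C' \<and> (\<forall>i<N. Y i \<omega> \<in> E i)}"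
    unfolding marks_integral_def using measurable_space[OF epochs_measurable] CE
    by (subst nn_integral_indicator[OF event, symmetric], intro nn_integral_cong)
      (auto simp: indicator_def C'_def prod.neutral_const)
  also have "\<dots> = (\<integral>\<^sup>+\<omega>. indicator C' (epochs \<omega>) * (\<Prod>i<N. emeasure (batch_law i \<omega>) (E i)) \<partial>M)"
    using CE by (intro conjunct2[OF marked[unfolded marked_by_def], rule_format, of C' N E] C') auto
  also have "\<dots> = kernel_integral N F"
    unfolding kernel_integral_def
  proof (intro nn_integral_cong)
    fix \<omega> assume \<omega>: "\<omega> \<in> space M"
    have "(\<Prod>n<N. \<integral>\<^sup>+y. F n (epochs \<omega>, y) \<partial>batch_law n \<omega>)
        = (\<Prod>n<N. indicator (C n) (epochs \<omega>)) * (\<Prod>n<N. emeasure (batch_law n \<omega>) (E n))"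
      unfolding prod.distrib[symmetric] using CE by (intro prod.cong refl) (simp add: nn_integral_indicator_rectangle)
    also have "(\<Prod>n<N. indicator (C n) (epochs \<omega>) :: ennreal) = indicator C' (epochs \<omega>)"
      using measurable_space[OF epochs_measurable \<omega>] by (auto simp: C'_def indicator_def)
    finally show "indicator C' (epochs \<omega>) * (\<Prod>i<N. emeasure (batch_law i \<omega>) (E i))
        = (\<Prod>n<N. \<integral>\<^sup>+y. F n (epochs \<omega>, y) \<partial>batch_law n \<omega>)" by simp
  qed
  finally show ?thesis .
qed

lemma marks_integral_replace_factor:
  assumes j: "j < N" and F: "\<And>n. n < N \<Longrightarrow> F n \<in> bounded_tests"
    and rectangle: "\<And>R. R \<in> rectangle_tests \<Longrightarrow> marks_integral N (F(j := R)) = kernel_integral N (F(j := R))"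
  shows "marks_integral N F = kernel_integral N F"
proof -
  define w where "w \<omega> = (\<Prod>n\<in>{..<N}-{j}. F n (epochs \<omega>, Y n \<omega>))" for \<omega>
  define w' where "w' \<omega> = (\<Prod>n\<in>{..<N}-{j}. \<integral>\<^sup>+y. F n (epochs \<omega>, y) \<partial>batch_law n \<omega>)" for \<omega>
  have F_measurable: "F n \<in> borel_measurable (timesM \<Otimes>\<^sub>M markM)" and F_le_1: "F n x \<le> 1"
    if "n < N" for n x
    using F[OF that] unfolding bounded_tests_def by blast+
  have w_measurable: "w \<in> borel_measurable M" "w' \<in> borel_measurable M"
    unfolding w_def w'_def using F_measurable by (auto intro!: borel_measurable_prod_ennreal)
  have w_le_1: "w \<omega> \<le> 1" for \<omega>
    unfolding w_def using F_le_1 by (intro prod_le_1) auto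
  have marks_split: "marks_integral N (F(j := f)) = (\<integral>\<^sup>+\<omega>. w \<omega> * f (epochs \<omega>, Y j \<omega>) \<partial>M)" for f
    unfolding marks_integral_def w_def using j
    by (simp add: prod.remove[of "{..<N}" j] mult.commute cong: prod.cong_simp)
  have kernel_split: "kernel_integral N (F(j := f))
      = (\<integral>\<^sup>+\<omega>. w' \<omega> * (\<integral>\<^sup>+y. f (epochs \<omega>, y) \<partial>batch_law j \<omega>) \<partial>M)" for f
    unfolding kernel_integral_def w'_def using j
    by (simp add: prod.remove[of "{..<N}" j] mult.commute cong: prod.cong_simp)
  have "marks_integral N F = (\<integral>\<^sup>+\<omega>. w \<omega> * F j (epochs \<omega>, Y j \<omega>) \<partial>M)"
    using marks_split[of "F j"] by simp
  also have "\<dots> = (\<integral>\<^sup>+\<omega>. w' \<omega> * (\<integral>\<^sup>+y. F j (epochs \<omega>, y) \<partial>batch_law j \<omega>) \<partial>M)"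
  proof (rule nn_integral_Pair_eq_kernel[OF epochs_measurable Y_measurable batch_law_measurable
        w_measurable w_le_1 _ F_measurable[OF j]])
    fix C E assume CE: "C \<in> sets timesM" "E \<in> sets markM"
    then have "indicator (C \<times> E) \<in> rectangle_tests" by (auto simp: rectangle_tests_def)
    from rectangle[OF this] CE
    show "(\<integral>\<^sup>+\<omega>. w \<omega> * indicator (C \<times> E) (epochs \<omega>, Y j \<omega>) \<partial>M)
        = (\<integral>\<^sup>+\<omega>. w' \<omega> * (indicator C (epochs \<omega>) * emeasure (batch_law j \<omega>) E) \<partial>M)"
      by (simp add: marks_split kernel_split nn_integral_indicator_rectangle)
  qed
  also have "\<dots> = kernel_integral N F"
    using kernel_split[of "F j"] by simp
  finally show ?thesis .
qed

lemma marks_integral_eq_kernel_integral: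
  assumes "\<And>n. n < N \<Longrightarrow> F n \<in> bounded_tests"
  shows "marks_integral N F = kernel_integral N F"
proof -
  have "marks_integral N F = kernel_integral N F"
    if "j \<le> N" "\<And>n. n < N \<Longrightarrow> F n \<in> bounded_tests" "\<And>n. j \<le> n \<Longrightarrow> n < N \<Longrightarrow> F n \<in> rectangle_tests"
    for j F
    using that
  proof (induct j arbitrary: F)
    case 0
    then show ?case by (intro marks_integral_eq_kernel_integral_rectangles) auto
  next
    case (Suc j)
    show ?case
    proof (rule marks_integral_replace_factor[of j])
      fix R assume "R \<in> rectangle_tests"
      then show "marks_integral N (F(j := R)) = kernel_integral N (F(j := R))"
        using Suc rectangle_tests_subset_bounded_tests by (intro Suc.hyps) auto
    qed (use Suc in auto)
  qed
  from this[of N F] show ?thesis using assms by simp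
qed

context
  fixes \<phi> :: "real \<Rightarrow> nat \<times> (nat \<Rightarrow> real) \<Rightarrow> real"
  assumes \<phi>[measurable]: "(\<lambda>p. \<phi> (fst p) (snd p)) \<in> borel_measurable (borel \<Otimes>\<^sub>M markM)"
    and \<phi>_bounds: "\<And>s y. 0 \<le> \<phi> s y \<and> \<phi> s y \<le> 1"
begin

lemma integrable_kernel: "integrable (K s) (\<phi> s)"
proof -
  interpret K: prob_space "K s" by (rule prob_space_K)
  have "(\<lambda>y. (s, y)) \<in> markM \<rightarrow>\<^sub>M borel \<Otimes>\<^sub>M markM" by measurable
  from measurable_compose[OF this \<phi>] have "\<phi> s \<in> borel_measurable (K s)"
    by (simp add: measurable_cong_sets[OF sets_K refl])
  then show ?thesis using \<phi>_bounds by (intro K.integrable_const_bound[where B=1]) auto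
qed

lemma nn_integral_kernel_average: "(\<integral>\<^sup>+y. ennreal (\<phi> s y) \<partial>K s) = ennreal (\<integral>y. \<phi> s y \<partial>K s)"
  using \<phi>_bounds by (intro nn_integral_eq_integral integrable_kernel) auto

lemma kernel_average_bounds: "0 \<le> (\<integral>y. \<phi> s y \<partial>K s) \<and> (\<integral>y. \<phi> s y \<partial>K s) \<le> 1"
proof -
  interpret K: prob_space "K s" by (rule prob_space_K)
  have "(\<integral>y. \<phi> s y \<partial>K s) \<le> (\<integral>y. 1 \<partial>K s)"
    using \<phi>_bounds by (intro integral_mono integrable_kernel) auto
  then show ?thesis using \<phi>_bounds by (auto intro: integral_nonneg simp: K.prob_space)
qed

lemma kernel_average_measurable[measurable]: "(\<lambda>s. \<integral>y. \<phi> s y \<partial>K s) \<in> borel_measurable borel"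
proof -
  have "(\<lambda>s. \<integral>\<^sup>+y. ennreal (\<phi> s y) \<partial>K s) \<in> borel_measurable borel"
    by (rule nn_integral_measurable_subprob_algebra2[OF _ K_measurable]) (simp add: split_beta')
  then have "(\<lambda>s. enn2real (\<integral>\<^sup>+y. ennreal (\<phi> s y) \<partial>K s)) \<in> borel_measurable borel"
    by measurable
  then show ?thesis by (simp add: nn_integral_kernel_average kernel_average_bounds)
qed

lemma integral_one_minus_kernel: "(\<integral>y. 1 - \<phi> s y \<partial>K s) = 1 - (\<integral>y. \<phi> s y \<partial>K s)"
proof -
  interpret K: prob_space "K s" by (rule prob_space_K)
  show ?thesis using integrable_kernel by (simp add: Bochner_Integration.integral_diff K.prob_space)
qed


lemma measurable_marks_average[measurable]:
  "(\<lambda>\<omega>. \<phi> (real_of_ereal (T n \<omega>)) (Y n \<omega>)) \<in> borel_measurable M"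
  using measurable_compose[OF _ \<phi>, of "\<lambda>\<omega>. (real_of_ereal (T n \<omega>), Y n \<omega>)"] by simp

lemma expectation_prod_lessThan_marks:
  "expectation (\<lambda>\<omega>. \<Prod>n<N. if T n \<omega> \<le> ereal t then \<phi> (real_of_ereal (T n \<omega>)) (Y n \<omega>) else 1)
   = expectation (\<lambda>\<omega>. \<Prod>n<N. if T n \<omega> \<le> ereal t then (\<integral>y. \<phi> (real_of_ereal (T n \<omega>)) y \<partial>batch_law n \<omega>) else 1)"
    (is "expectation ?P = expectation ?Q")
proof -
  define F where "F n p = ennreal (if fst p n \<le> ereal t then \<phi> (real_of_ereal (fst p n)) (snd p) else 1)"
    for n and p :: "(nat \<Rightarrow> ereal) \<times> (nat \<times> (nat \<Rightarrow> real))"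
  have [measurable]: "(\<lambda>p. fst p n) \<in> borel_measurable (timesM \<Otimes>\<^sub>M markM)" for n
    unfolding timesM_def by measurable
  have [measurable]: "(\<lambda>p. \<phi> (real_of_ereal (fst p n)) (snd p)) \<in> borel_measurable (timesM \<Otimes>\<^sub>M markM)" for n
    using measurable_compose[OF _ \<phi>, of "\<lambda>p. (real_of_ereal (fst p n), snd p)"] by simp
  have "F n \<in> borel_measurable (timesM \<Otimes>\<^sub>M markM)" for n
    unfolding F_def by measurable
  then have tests: "F n \<in> bounded_tests" for n
    unfolding bounded_tests_def F_def using \<phi>_bounds by auto
  have "F n (epochs \<omega>, Y n \<omega>) = ennreal (if T n \<omega> \<le> ereal t then \<phi> (real_of_ereal (T n \<omega>)) (Y n \<omega>) else 1)"
    for n \<omega> by (simp add: F_def)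
  then have "(\<integral>\<^sup>+\<omega>. ennreal (?P \<omega>) \<partial>M) = marks_integral N F"
    unfolding marks_integral_def using \<phi>_bounds by (simp add: prod_ennreal)
  also have "\<dots> = kernel_integral N F"
    using tests by (rule marks_integral_eq_kernel_integral)
  also have "\<dots> = (\<integral>\<^sup>+\<omega>. ennreal (?Q \<omega>) \<partial>M)"
  proof -
    have "(\<integral>\<^sup>+y. F n (epochs \<omega>, y) \<partial>batch_law n \<omega>)
        = ennreal (if T n \<omega> \<le> ereal t then \<integral>y. \<phi> (real_of_ereal (T n \<omega>)) y \<partial>batch_law n \<omega> else 1)" for n \<omega>
      unfolding F_def by (simp add: nn_integral_kernel_average prob_space.emeasure_space_1[OF prob_space_K])
    then show ?thesis unfolding kernel_integral_def using kernel_average_bounds by (simp add: prod_ennreal)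
  qed
  finally show ?thesis
    using \<phi>_bounds kernel_average_bounds kernel_average_measurable
    by (simp add: integral_eq_nn_integral prod_nonneg)
qed
end

end

section \<open>The batch queue\<close>

locale batch_queue = nhpp_process M lam T + marked_process M K T Y
  for M :: "'w measure" and lam K T Y
begin

lemma expectation_prod_arrival_marks:
  assumes \<phi>: "(\<lambda>p. \<phi> (fst p) (snd p)) \<in> borel_measurable (borel \<Otimes>\<^sub>M markM)"
    and \<phi>_bounds: "\<And>s y. 0 \<le> \<phi> s y \<and> \<phi> s y \<le> 1"
  shows "expectation (\<lambda>\<omega>. \<Prod>n\<in>arrivals T \<omega> t. \<phi> (real_of_ereal (T n \<omega>)) (Y n \<omega>))
       = expectation (arrival_prod t (\<lambda>s. \<integral>y. \<phi> s y \<partial>K s))"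
proof -
  let ?P = "\<lambda>N \<omega>. \<Prod>n<N. if T n \<omega> \<le> ereal t then \<phi> (real_of_ereal (T n \<omega>)) (Y n \<omega>) else 1"
  let ?Q = "\<lambda>N \<omega>. \<Prod>n<N. if T n \<omega> \<le> ereal t then (\<integral>y. \<phi> (real_of_ereal (T n \<omega>)) y \<partial>batch_law n \<omega>) else 1"
  have [measurable]: "(\<lambda>s. \<integral>y. \<phi> s y \<partial>K s) \<in> borel_measurable borel"
    using \<phi> \<phi>_bounds by (rule kernel_average_measurable)
  have "(\<lambda>N. expectation (?P N)) \<longlonglongrightarrow> expectation (\<lambda>\<omega>. \<Prod>n\<in>arrivals T \<omega> t. \<phi> (real_of_ereal (T n \<omega>)) (Y n \<omega>))"
    using \<phi>_bounds measurable_marks_average[OF \<phi> \<phi>_bounds] by (intro expectation_prod_lessThan_tendsto) auto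
  then have "(\<lambda>N. expectation (?Q N)) \<longlonglongrightarrow> expectation (\<lambda>\<omega>. \<Prod>n\<in>arrivals T \<omega> t. \<phi> (real_of_ereal (T n \<omega>)) (Y n \<omega>))"
    unfolding expectation_prod_lessThan_marks[OF \<phi> \<phi>_bounds] .
  moreover have "(\<lambda>N. expectation (?Q N)) \<longlonglongrightarrow> expectation (arrival_prod t (\<lambda>s. \<integral>y. \<phi> s y \<partial>K s))"
    unfolding arrival_prod_def using kernel_average_bounds[OF \<phi> \<phi>_bounds]
    by (intro expectation_prod_lessThan_tendsto) auto
  ultimately show ?thesis by (rule LIMSEQ_unique)
qed

end

definition batch_exponent :: "real \<Rightarrow> real \<Rightarrow> real \<Rightarrow> real \<Rightarrow> real \<Rightarrow> nat \<times> (nat \<Rightarrow> real) \<Rightarrow> real" where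
  "batch_exponent t \<alpha> \<beta> \<gamma> s y = (\<Sum>j<fst y.
      \<beta> * (if snd y j > t - s then 1 else 0)
    + \<gamma> * (if snd y j \<le> t - s then 1 else 0)
    + \<alpha> * max 0 (snd y j - (t - s)))"

lemma batch_exponent_nonneg: "0 \<le> \<alpha> \<Longrightarrow> 0 \<le> \<beta> \<Longrightarrow> 0 \<le> \<gamma> \<Longrightarrow> 0 \<le> batch_exponent t \<alpha> \<beta> \<gamma> s y"
  unfolding batch_exponent_def by (intro sum_nonneg) auto

lemma borel_measurable_batch_exponent:
  "(\<lambda>p. batch_exponent t \<alpha> \<beta> \<gamma> (fst p) (snd p)) \<in> borel_measurable (borel \<Otimes>\<^sub>M markM)"
proof -
  define G where "G b p = (\<Sum>j<b. \<beta> * (if snd (snd p) j > t - fst p then 1 else 0)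
      + \<gamma> * (if snd (snd p) j \<le> t - fst p then 1 else 0)
      + \<alpha> * max 0 (snd (snd p) j - (t - fst p)))" for b and p :: "real \<times> nat \<times> (nat \<Rightarrow> real)"
  have "(\<lambda>p. G (fst (snd p)) p) \<in> borel_measurable (borel \<Otimes>\<^sub>M markM)"
  proof (rule measurable_compose_countable)
    show "(\<lambda>p. fst (snd p)) \<in> borel \<Otimes>\<^sub>M markM \<rightarrow>\<^sub>M count_space UNIV"
      unfolding markM_def by measurable
    show "G b \<in> borel_measurable (borel \<Otimes>\<^sub>M markM)" for b
      unfolding G_def markM_def by measurable
  qed
  moreover have "(\<lambda>p. G (fst (snd p)) p) = (\<lambda>p. batch_exponent t \<alpha> \<beta> \<gamma> (fst p) (snd p))"
    by (simp add: fun_eq_iff G_def batch_exponent_def)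
  ultimately show ?thesis by simp
qed

lemma exp_queue_eq_prod_arrivals:
  assumes "finite (arrivals T \<omega> t)"
  shows "exp (- \<alpha> * Wload T Y t \<omega> - \<beta> * real (Qnum T Y t \<omega>) - \<gamma> * real (Dnum T Y t \<omega>))
       = (\<Prod>n\<in>arrivals T \<omega> t. exp (- batch_exponent t \<alpha> \<beta> \<gamma> (real_of_ereal (T n \<omega>)) (Y n \<omega>)))"
proof -
  have card_eq: "real (card {j. j < b \<and> P j}) = (\<Sum>j<b. if P j then 1 else 0)" for b and P :: "nat \<Rightarrow> bool"
  proof -
    have "(\<Sum>j<b. of_bool (P j) :: real) = real (card ({..<b} \<inter> {j. P j}))"
      by (rule sum_of_bool_eq) simp_all
    then show ?thesis by (simp add: of_bool_def Int_def conj_commute)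
  qed
  have "\<alpha> * Wload T Y t \<omega> + \<beta> * real (Qnum T Y t \<omega>) + \<gamma> * real (Dnum T Y t \<omega>)
      = (\<Sum>n\<in>arrivals T \<omega> t. batch_exponent t \<alpha> \<beta> \<gamma> (real_of_ereal (T n \<omega>)) (Y n \<omega>))"
    unfolding Wload_def Qnum_def Dnum_def batch_exponent_def of_nat_sum card_eq
    by (simp add: sum_distrib_left sum.distrib)
  then have "- \<alpha> * Wload T Y t \<omega> - \<beta> * real (Qnum T Y t \<omega>) - \<gamma> * real (Dnum T Y t \<omega>)
      = (\<Sum>n\<in>arrivals T \<omega> t. - batch_exponent t \<alpha> \<beta> \<gamma> (real_of_ereal (T n \<omega>)) (Y n \<omega>))"
    unfolding sum_negf by linarith
  then show ?thesis by (simp add: exp_sum[OF assms])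
qed

theorem theorem5:
  fixes M :: "'w measure" and lam :: "real \<Rightarrow> real"
    and K :: "real \<Rightarrow> (nat \<times> (nat \<Rightarrow> real)) measure"
    and T :: "nat \<Rightarrow> 'w \<Rightarrow> ereal" and Y :: "nat \<Rightarrow> 'w \<Rightarrow> nat \<times> (nat \<Rightarrow> real)"
    and t \<alpha> \<beta> \<gamma> :: real
  assumes "prob_space M" and "nhpp M lam T" and "batch_kernel K" and "marked_by M K T Y"
    and "0 \<le> t" and "0 \<le> \<alpha>" and "0 \<le> \<beta>" and "0 \<le> \<gamma>"
  shows "(\<integral>\<omega>. exp (- \<alpha> * Wload T Y t \<omega> - \<beta> * real (Qnum T Y t \<omega>) - \<gamma> * real (Dnum T Y t \<omega>)) \<partial>M)
       = exp (- (LINT s:{0..t}|lborel.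
            (\<integral>y. 1 - exp (- (\<Sum>j<fst y.
                  \<beta> * (if snd y j > t - s then 1 else 0)
                + \<gamma> * (if snd y j \<le> t - s then 1 else 0)
                + \<alpha> * max 0 (snd y j - (t - s)))) \<partial>K s) * lam s))"
proof -
  interpret nhpp_process M lam T
    by (intro nhpp_process.intro nhpp_process_axioms.intro assms(1,2))
  interpret marked_process M K T Y
    by (intro marked_process.intro marked_process_axioms.intro assms(1,3,4) T_measurable)
  interpret batch_queue M lam K T Y ..
  define \<phi> where "\<phi> s y = exp (- batch_exponent t \<alpha> \<beta> \<gamma> s y)" for s y
  have \<phi>: "(\<lambda>p. \<phi> (fst p) (snd p)) \<in> borel_measurable (borel \<Otimes>\<^sub>M markM)"
    unfolding \<phi>_def by (rule measurable_compose[OF borel_measurable_batch_exponent, of "\<lambda>x. exp (- x)"]) simp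
  have \<phi>_bounds: "0 \<le> \<phi> s y \<and> \<phi> s y \<le> 1" for s y
    unfolding \<phi>_def using batch_exponent_nonneg[OF assms(6-8)] by simp
  have "(\<integral>\<omega>. exp (- \<alpha> * Wload T Y t \<omega> - \<beta> * real (Qnum T Y t \<omega>) - \<gamma> * real (Dnum T Y t \<omega>)) \<partial>M)
      = expectation (\<lambda>\<omega>. \<Prod>n\<in>arrivals T \<omega> t. \<phi> (real_of_ereal (T n \<omega>)) (Y n \<omega>))"
    unfolding \<phi>_def by (intro Bochner_Integration.integral_cong refl exp_queue_eq_prod_arrivals finite_arrivals)
  also have "\<dots> = expectation (arrival_prod t (\<lambda>s. \<integral>y. \<phi> s y \<partial>K s))"
    using \<phi> \<phi>_bounds by (rule expectation_prod_arrival_marks)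
  also have "\<dots> = exp (- (LINT s:{0..t}|lborel. (1 - (\<integral>y. \<phi> s y \<partial>K s)) * lam s))"
    using poisson_pgfl_borel[OF assms(5) kernel_average_measurable[OF \<phi> \<phi>_bounds]
        kernel_average_bounds[OF \<phi> \<phi>_bounds]]
    by (simp add: poisson_pgfl_def)
  also have "(LINT s:{0..t}|lborel. (1 - (\<integral>y. \<phi> s y \<partial>K s)) * lam s)
      = (LINT s:{0..t}|lborel. (\<integral>y. 1 - \<phi> s y \<partial>K s) * lam s)"
    by (simp add: integral_one_minus_kernel[OF \<phi> \<phi>_bounds])
  finally show ?thesis unfolding \<phi>_def batch_exponent_def .
qed

end
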